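(* Let $\Omega\subset\mathbb{R}^d$, $\{q(\cdot|\boldsymbol{\lambda})\}_{\boldsymbol{\lambda}\in\Omega}$ a family of probability densities, $f(\mathbf{z})=-\log\pi(D,\mathbf{z})$, and for $\rho\in\mathcal{P}(\Omega)$ let $\mathcal{L}(\rho)=\mathbb{E}_{\boldsymbol{\lambda}\sim\rho}\mathbb{E}_{\mathbf{z}\sim q(\cdot|\boldsymbol{\lambda})}[f(\mathbf{z})+\log q_\rho(\mathbf{z})]$ with $q_\rho(\mathbf{z})=\int\rho(\boldsymbol{\lambda})q(\mathbf{z}|\boldsymbol{\lambda})d\boldsymbol{\lambda}$. Then for any $\rho,\rho'\in\mathcal{P}(\Omega)$, $$\mathcal{L}(\rho')-\mathcal{L}(\rho)-\int\delta\mathcal{L}(\rho)(\boldsymbol{\lambda})\big(\rho'(\boldsymbol{\lambda})-\rho(\boldsymbol{\lambda})\big)d\boldsymbol{\lambda}\le\mathrm{KL}(\rho',\rho).$$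
   Context: $\delta\mathcal{L}(\rho)(\boldsymbol{\lambda})=\mathbb{E}_{\mathbf{z}\sim q(\cdot|\boldsymbol{\lambda})}[f(\mathbf{z})+\log q_\rho(\mathbf{z})]+1$ is the first variation of $\mathcal{L}$ at $\rho$. $\mathrm{KL}(\rho',\rho)=\int\rho'\log(\rho'/\rho)$. *)

theory Defs
  imports "HOL-Analysis.Analysis"
begin

definition prob_density :: "'a::euclidean_space set \<Rightarrow> ('a \<Rightarrow> real) \<Rightarrow> bool" where
  "prob_density \<Omega> \<rho> \<longleftrightarrow>
     \<rho> \<in> borel_measurable lborel \<and> (\<forall>x. 0 \<le> \<rho> x) \<and> (\<forall>x. x \<notin> \<Omega> \<longrightarrow> \<rho> x = 0) \<and>
     integrable lborel \<rho> \<and> (\<integral>x. \<rho> x \<partial>lborel) = 1"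

text \<open>Mixture density q_rho(z) = int rho(lambda) q(z|lambda) dlambda; here q l z = q(z|l).\<close>
definition mixture :: "('a::euclidean_space \<Rightarrow> 'b::euclidean_space \<Rightarrow> real) \<Rightarrow> ('a \<Rightarrow> real) \<Rightarrow> 'b \<Rightarrow> real" where
  "mixture q \<rho> z = (\<integral>l. \<rho> l * q l z \<partial>lborel)"

definition objL :: "('b::euclidean_space \<Rightarrow> real) \<Rightarrow> ('a::euclidean_space \<Rightarrow> 'b \<Rightarrow> real) \<Rightarrow> ('a \<Rightarrow> real) \<Rightarrow> real" where
  "objL f q \<rho> = (\<integral>l. \<rho> l * (\<integral>z. q l z * (f z + ln (mixture q \<rho> z)) \<partial>lborel) \<partial>lborel)"

definition first_variation :: "('b::euclidean_space \<Rightarrow> real) \<Rightarrow> ('a::euclidean_space \<Rightarrow> 'b \<Rightarrow> real) \<Rightarrow> ('a \<Rightarrow> real) \<Rightarrow> 'a \<Rightarrow> real" where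
  "first_variation f q \<rho> l = (\<integral>z. q l z * (f z + ln (mixture q \<rho> z)) \<partial>lborel) + 1"

text \<open>KL(rho', rho) = int rho' log(rho'/rho), valued in the extended reals; it is +infinity
  when rho' is not absolutely continuous w.r.t. rho or the integral diverges
  (its negative part is always integrable, so divergence means +infinity).\<close>
definition KL :: "('a::euclidean_space \<Rightarrow> real) \<Rightarrow> ('a \<Rightarrow> real) \<Rightarrow> ereal" where
  "KL \<rho>' \<rho> =
    (if (AE x in lborel. \<rho> x = 0 \<longrightarrow> \<rho>' x = 0) \<and> integrable lborel (\<lambda>x. \<rho>' x * ln (\<rho>' x / \<rho> x))
     then ereal (\<integral>x. \<rho>' x * ln (\<rho>' x / \<rho> x) \<partial>lborel)
     else \<infinity>)"

end

theory Submission
  imports Defs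
begin

text \<open>Since \<open>\<rho>\<close> and \<open>\<rho>'\<close> have the same mass, the terms involving \<open>f\<close> cancel and the left-hand side becomes
  \<open>\<integral>\<integral> \<rho>'(l) q(z|l) ln (q\<rho>'(z) / q\<rho>(z))\<close>, i.e. \<open>KL(q\<rho>', q\<rho>)\<close> for the mixtures
  \<open>q\<rho>\<close>, \<open>q\<rho>'\<close>. The claim is thus the data-processing inequality for the kernel \<open>q\<close>.
  On the product space, \<open>ln x \<le> x - 1\<close> at \<open>x = \<rho>(l) q\<rho>'(z) / (\<rho>'(l) q\<rho>(z))\<close> bounds
  \<open>\<rho>'(l) q(z|l) (ln (q\<rho>'(z) / q\<rho>(z)) - ln (\<rho>'(l) / \<rho>(l)))\<close> by
  \<open>\<rho>(l) q(z|l) q\<rho>'(z) / q\<rho>(z) - \<rho>'(l) q(z|l)\<close>, and by Tonelli the integral of this bound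
  is at most \<open>\<integral> q\<rho>' - 1 = 0\<close>.\<close>

lemma mult_ln_ratio_le:
  fixes a b w A B :: real
  assumes "0 \<le> a" "0 \<le> b" "0 \<le> w" "0 \<le> A" "0 \<le> B"
    and "b = 0 \<Longrightarrow> a = 0" "0 < a * w \<Longrightarrow> 0 < A" "0 < b * w \<Longrightarrow> 0 < B"
  shows "a * w * (ln A - ln B) - a * ln (a / b) * w \<le> b * w * (A / B) - a * w"
proof (cases "a * w = 0")
  case True
  then show ?thesis
    using assms by (auto simp: algebra_simps)
next
  case False
  then have aw: "0 < a * w" and a: "0 < a" and "0 < w"
    using assms(1,3) by (auto simp: less_le)
  then have b: "0 < b" and A: "0 < A" and B: "0 < B"
    using assms by (auto simp: less_le)
  define x where "x = b * A / (a * B)"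
  have "0 < x" using a b A B by (simp add: x_def)
  have "a * w * (ln A - ln B) - a * ln (a / b) * w = a * w * ln x"
    using a b A B by (simp add: x_def ln_div ln_mult algebra_simps)
  also have "\<dots> \<le> a * w * (x - 1)"
    using ln_le_minus_one[OF \<open>0 < x\<close>] aw by (simp add: mult_left_mono)
  also have "\<dots> = b * w * (A / B) - a * w"
    using a B by (simp add: x_def field_simps)
  finally show ?thesis .
qed

locale density_kernel =
  fixes \<Omega> :: "'a::euclidean_space set" and q :: "'a \<Rightarrow> 'b::euclidean_space \<Rightarrow> real"
  assumes measurable_kernel: "(\<lambda>(l, z). q l z) \<in> borel_measurable (lborel \<Otimes>\<^sub>M lborel)"
    and kernel_nonneg: "l \<in> \<Omega> \<Longrightarrow> 0 \<le> q l z"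
    and integrable_kernel: "l \<in> \<Omega> \<Longrightarrow> integrable lborel (q l)"
    and integral_kernel: "l \<in> \<Omega> \<Longrightarrow> (\<integral>z. q l z \<partial>lborel) = 1"
begin

lemma measurable_kernel_pair [measurable]:
  "(\<lambda>x. q (fst x) (snd x)) \<in> borel_measurable (lborel \<Otimes>\<^sub>M lborel)"
  using measurable_kernel by (simp add: split_beta')

lemma measurable_kernel_section [measurable]: "(\<lambda>l. q l z) \<in> borel_measurable lborel"
  using measurable_compose[OF measurable_Pair2'[of z lborel lborel] measurable_kernel_pair] by simp

lemma measurable_mixture:
  assumes [measurable]: "r \<in> borel_measurable lborel"
  shows "mixture q r \<in> borel_measurable lborel"
proof -
  have "(\<lambda>x. q (snd x) (fst x)) \<in> borel_measurable (lborel \<Otimes>\<^sub>M lborel)"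
    using measurable_pair_swap[OF measurable_kernel_pair] by simp
  then have "(\<lambda>(z, l). r l * q l z) \<in> borel_measurable (lborel \<Otimes>\<^sub>M lborel)"
    unfolding split_beta' by measurable
  then show ?thesis
    unfolding mixture_def[abs_def] by (rule lborel.borel_measurable_lebesgue_integral)
qed

lemma
  assumes g: "integrable lborel g" and g_outside: "\<And>l. l \<notin> \<Omega> \<Longrightarrow> g l = 0"
  shows integrable_kernel_product: "integrable (lborel \<Otimes>\<^sub>M lborel) (\<lambda>(l, z). g l * q l z)"
    and integral_kernel_product:
      "(\<integral>x. (\<lambda>(l, z). g l * q l z) x \<partial>(lborel \<Otimes>\<^sub>M lborel)) = (\<integral>l. g l \<partial>lborel)"
proof -
  have [measurable]: "g \<in> borel_measurable lborel"
    using g by blast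
  have section_integrable: "integrable lborel (\<lambda>z. g l * q l z)" for l
    using integrable_kernel g_outside by (cases "l \<in> \<Omega>") auto
  have section_integral: "(\<integral>z. g l * q l z \<partial>lborel) = g l" for l
    using integral_kernel g_outside by (cases "l \<in> \<Omega>") auto
  have section_abs_integral: "(\<integral>z. \<bar>g l * q l z\<bar> \<partial>lborel) = \<bar>g l\<bar>" for l
  proof (cases "l \<in> \<Omega>")
    case True
    then have "(\<integral>z. \<bar>g l * q l z\<bar> \<partial>lborel) = (\<integral>z. \<bar>g l\<bar> * q l z \<partial>lborel)"
      by (simp add: abs_mult kernel_nonneg)
    then show ?thesis
      using integral_kernel[OF True] by simp
  qed (simp add: g_outside)
  show int: "integrable (lborel \<Otimes>\<^sub>M lborel) (\<lambda>(l, z). g l * q l z)"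
  proof (rule lborel_pair.Fubini_integrable)
    show "(\<lambda>(l, z). g l * q l z) \<in> borel_measurable (lborel \<Otimes>\<^sub>M lborel)"
      unfolding split_beta' by measurable
    show "integrable lborel (\<lambda>l. \<integral>z. norm ((\<lambda>(l, z). g l * q l z) (l, z)) \<partial>lborel)"
      using g by (simp add: section_abs_integral)
    show "AE l in lborel. integrable lborel (\<lambda>z. (\<lambda>(l, z). g l * q l z) (l, z))"
      using section_integrable by simp
  qed
  have "(\<integral>x. (\<lambda>(l, z). g l * q l z) x \<partial>(lborel \<Otimes>\<^sub>M lborel))
      = (\<integral>l. (\<integral>z. g l * q l z \<partial>lborel) \<partial>lborel)"
    by (rule lborel_pair.integral_fst[OF int, symmetric])
  also have "\<dots> = (\<integral>l. g l \<partial>lborel)"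
    by (simp only: section_integral)
  finally show "(\<integral>x. (\<lambda>(l, z). g l * q l z) x \<partial>(lborel \<Otimes>\<^sub>M lborel)) = (\<integral>l. g l \<partial>lborel)" .
qed

context
  fixes r :: "'a \<Rightarrow> real"
  assumes r: "prob_density \<Omega> r"
begin

lemma
  shows measurable_density [measurable]: "r \<in> borel_measurable lborel"
    and density_nonneg: "0 \<le> r l"
    and density_outside: "l \<notin> \<Omega> \<Longrightarrow> r l = 0"
    and integrable_density: "integrable lborel r"
    and integral_density: "(\<integral>l. r l \<partial>lborel) = 1"
  using r by (auto simp: prob_density_def)

lemma joint_density_nonneg: "0 \<le> r l * q l z"
  by (cases "l \<in> \<Omega>") (simp_all add: density_nonneg kernel_nonneg density_outside)

lemma integrable_joint_density: "integrable (lborel \<Otimes>\<^sub>M lborel) (\<lambda>(l, z). r l * q l z)"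
  by (rule integrable_kernel_product[OF integrable_density density_outside])

lemma integral_joint_density: "(\<integral>x. (\<lambda>(l, z). r l * q l z) x \<partial>(lborel \<Otimes>\<^sub>M lborel)) = 1"
  using integral_kernel_product[OF integrable_density density_outside] integral_density by simp

lemma mixture_nonneg: "0 \<le> mixture q r z"
  unfolding mixture_def by (simp add: integral_nonneg joint_density_nonneg)

lemma prob_density_mixture: "prob_density UNIV (mixture q r)"
  unfolding prob_density_def
proof (intro conjI allI impI)
  show "mixture q r \<in> borel_measurable lborel"
    by (rule measurable_mixture) measurable
  show "integrable lborel (mixture q r)"
    using lborel_pair.integrable_snd[OF integrable_joint_density] by (simp add: mixture_def[abs_def])
  show "(\<integral>z. mixture q r z \<partial>lborel) = 1"
    using lborel_pair.integral_snd[OF integrable_joint_density] integral_joint_density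
    by (simp add: mixture_def[abs_def])
qed (simp_all add: mixture_nonneg)

lemma AE_mixture_pos:
  "AE x in lborel \<Otimes>\<^sub>M lborel. 0 < r (fst x) * q (fst x) (snd x) \<longrightarrow> 0 < mixture q r (snd x)"
proof -
  have [measurable]: "mixture q r \<in> borel_measurable lborel"
    by (rule measurable_mixture) measurable
  have "AE z in lborel. AE l in lborel. 0 < r l * q l z \<longrightarrow> 0 < mixture q r z"
    using lborel_pair.AE_integrable_snd[OF integrable_joint_density]
  proof eventually_elim
    case (elim z)
    show ?case
    proof (cases "mixture q r z = 0")
      case True
      then have "AE l in lborel. r l * q l z = 0"
        using integral_nonneg_eq_0_iff_AE[OF elim] joint_density_nonneg
        by (simp add: mixture_def)
      then show ?thesis by eventually_elim auto
    qed (use mixture_nonneg[of z] in \<open>simp add: less_le\<close>)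
  qed
  then have "AE l in lborel. AE z in lborel. 0 < r l * q l z \<longrightarrow> 0 < mixture q r z"
    by (subst lborel_pair.AE_commute) measurable
  moreover have "{x \<in> space (lborel \<Otimes>\<^sub>M lborel).
      0 < r (fst x) * q (fst x) (snd x) \<longrightarrow> 0 < mixture q r (snd x)} \<in> sets (lborel \<Otimes>\<^sub>M lborel)"
    by measurable
  ultimately show ?thesis
    by (auto intro: lborel_pair.AE_pair_measure)
qed

lemma
  assumes [measurable]: "h \<in> borel_measurable lborel"
    and h_nonneg: "\<And>z. 0 \<le> h z" and h_integrable: "integrable lborel h"
  shows integrable_mixture_ratio:
      "integrable (lborel \<Otimes>\<^sub>M lborel) (\<lambda>(l, z). r l * q l z * (h z / mixture q r z))"
    and integral_mixture_ratio_le: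
      "(\<integral>x. (\<lambda>(l, z). r l * q l z * (h z / mixture q r z)) x \<partial>(lborel \<Otimes>\<^sub>M lborel))
         \<le> (\<integral>z. h z \<partial>lborel)"
proof -
  let ?G = "\<lambda>(l, z). r l * q l z * (h z / mixture q r z)"
  have [measurable]: "mixture q r \<in> borel_measurable lborel"
    by (rule measurable_mixture) measurable
  have G_measurable: "?G \<in> borel_measurable (lborel \<Otimes>\<^sub>M lborel)"
    unfolding split_beta' by measurable
  have G_nonneg: "0 \<le> ?G x" for x
    using joint_density_nonneg h_nonneg mixture_nonneg by (auto split: prod.split)
  have "(\<integral>\<^sup>+x. ennreal (?G x) \<partial>(lborel \<Otimes>\<^sub>M lborel))
      = (\<integral>\<^sup>+z. (\<integral>\<^sup>+l. ennreal (?G (l, z)) \<partial>lborel) \<partial>lborel)"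
    by (rule lborel_pair.nn_integral_snd[symmetric]) (use G_measurable in measurable)
  also have "\<dots> = (\<integral>\<^sup>+z. (\<integral>\<^sup>+l. ennreal (r l * q l z) * ennreal (h z / mixture q r z) \<partial>lborel) \<partial>lborel)"
    by (simp only: case_prod_conv ennreal_mult'[OF joint_density_nonneg])
  also have "\<dots> \<le> (\<integral>\<^sup>+z. ennreal (h z) \<partial>lborel)"
  proof (rule nn_integral_mono_AE)
    show "AE z in lborel. (\<integral>\<^sup>+l. ennreal (r l * q l z) * ennreal (h z / mixture q r z) \<partial>lborel)
        \<le> ennreal (h z)"
      using lborel_pair.AE_integrable_snd[OF integrable_joint_density]
    proof eventually_elim
      case (elim z)
      have "(\<integral>\<^sup>+l. ennreal (r l * q l z) * ennreal (h z / mixture q r z) \<partial>lborel)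
          = (\<integral>\<^sup>+l. ennreal (r l * q l z) \<partial>lborel) * ennreal (h z / mixture q r z)"
        by (rule nn_integral_multc) measurable
      also have "(\<integral>\<^sup>+l. ennreal (r l * q l z) \<partial>lborel) = ennreal (mixture q r z)"
        unfolding mixture_def using elim joint_density_nonneg by (intro nn_integral_eq_integral) auto
      also have "ennreal (mixture q r z) * ennreal (h z / mixture q r z)
          = ennreal (mixture q r z * (h z / mixture q r z))"
        by (rule ennreal_mult[symmetric]) (simp_all add: mixture_nonneg h_nonneg)
      also have "\<dots> \<le> ennreal (h z)"
        using mixture_nonneg[of z] h_nonneg[of z] by (cases "mixture q r z = 0") auto
      finally show ?case .
    qed
  qed
  also have "\<dots> = ennreal (\<integral>z. h z \<partial>lborel)"
    using h_integrable h_nonneg by (intro nn_integral_eq_integral) auto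
  finally have nn_le: "(\<integral>\<^sup>+x. ennreal (?G x) \<partial>(lborel \<Otimes>\<^sub>M lborel)) \<le> ennreal (\<integral>z. h z \<partial>lborel)" .
  show "integrable (lborel \<Otimes>\<^sub>M lborel) ?G"
    using G_measurable G_nonneg nn_le by (intro integrableI_nonneg) (auto simp: top.not_eq_extremum
        intro: le_less_trans)
  have "integral\<^sup>L (lborel \<Otimes>\<^sub>M lborel) ?G = enn2real (\<integral>\<^sup>+x. ennreal (?G x) \<partial>(lborel \<Otimes>\<^sub>M lborel))"
    using G_measurable G_nonneg by (intro integral_eq_nn_integral) auto
  also have "\<dots> \<le> (\<integral>z. h z \<partial>lborel)"
    using nn_le h_nonneg by (simp add: enn2real_leI integral_nonneg)
  finally show "integral\<^sup>L (lborel \<Otimes>\<^sub>M lborel) ?G \<le> (\<integral>z. h z \<partial>lborel)" .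
qed

end

lemma AE_log_ratio_le:
  assumes \<rho>: "prob_density \<Omega> \<rho>" and \<rho>': "prob_density \<Omega> \<rho>'"
    and abs_cont: "AE l in lborel. \<rho> l = 0 \<longrightarrow> \<rho>' l = 0"
  shows "AE (l, z) in lborel \<Otimes>\<^sub>M lborel.
    \<rho>' l * q l z * (ln (mixture q \<rho>' z) - ln (mixture q \<rho> z)) - \<rho>' l * ln (\<rho>' l / \<rho> l) * q l z
      \<le> \<rho> l * q l z * (mixture q \<rho>' z / mixture q \<rho> z) - \<rho>' l * q l z"
proof -
  have [measurable]: "\<rho> \<in> borel_measurable lborel" "\<rho>' \<in> borel_measurable lborel"
    using \<rho> \<rho>' by (simp_all add: measurable_density)
  have "{x \<in> space (lborel \<Otimes>\<^sub>M lborel). \<rho> (fst x) = 0 \<longrightarrow> \<rho>' (fst x) = 0} \<in> sets (lborel \<Otimes>\<^sub>M lborel)"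
    by measurable
  then have "AE x in lborel \<Otimes>\<^sub>M lborel. \<rho> (fst x) = 0 \<longrightarrow> \<rho>' (fst x) = 0"
    using abs_cont by (auto intro: lborel_pair.AE_pair_measure)
  with AE_mixture_pos[OF \<rho>] AE_mixture_pos[OF \<rho>'] show ?thesis
  proof eventually_elim
    case (elim x)
    obtain l z where x: "x = (l, z)" by (cases x)
    show ?case
    proof (cases "l \<in> \<Omega>")
      case True
      show ?thesis
        unfolding x split
        by (rule mult_ln_ratio_le)
          (use elim True in \<open>auto simp: x kernel_nonneg density_nonneg[OF \<rho>] density_nonneg[OF \<rho>']
            mixture_nonneg[OF \<rho>] mixture_nonneg[OF \<rho>']\<close>)
    qed (simp add: x density_outside[OF \<rho>] density_outside[OF \<rho>'])
  qed
qed

lemma mixture_log_ratio_le_KL: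
  assumes \<rho>: "prob_density \<Omega> \<rho>" and \<rho>': "prob_density \<Omega> \<rho>'"
    and integrable: "integrable (lborel \<Otimes>\<^sub>M lborel)
          (\<lambda>(l, z). \<rho>' l * q l z * (ln (mixture q \<rho>' z) - ln (mixture q \<rho> z)))"
  shows "ereal (\<integral>x. (\<lambda>(l, z). \<rho>' l * q l z * (ln (mixture q \<rho>' z) - ln (mixture q \<rho> z))) x
           \<partial>(lborel \<Otimes>\<^sub>M lborel)) \<le> KL \<rho>' \<rho>"
proof (cases "(AE l in lborel. \<rho> l = 0 \<longrightarrow> \<rho>' l = 0) \<and> integrable lborel (\<lambda>l. \<rho>' l * ln (\<rho>' l / \<rho> l))")
  case False
  then have "KL \<rho>' \<rho> = \<infinity>"
    unfolding KL_def by (rule if_not_P)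
  then show ?thesis by simp
next
  case True
  then have abs_cont: "AE l in lborel. \<rho> l = 0 \<longrightarrow> \<rho>' l = 0"
    and KL_integrable: "integrable lborel (\<lambda>l. \<rho>' l * ln (\<rho>' l / \<rho> l))" by auto
  let ?M = "lborel \<Otimes>\<^sub>M lborel :: ('a \<times> 'b) measure"
  let ?A = "mixture q \<rho>'" and ?B = "mixture q \<rho>"
  let ?D = "\<lambda>(l, z). \<rho>' l * q l z * (ln (?A z) - ln (?B z))"
  let ?K = "\<lambda>(l, z). \<rho>' l * ln (\<rho>' l / \<rho> l) * q l z"
  let ?R = "\<lambda>(l, z). \<rho> l * q l z * (?A z / ?B z)"
  let ?P = "\<lambda>(l, z). \<rho>' l * q l z"
  have K_integrable: "integrable ?M ?K"
    using KL_integrable by (rule integrable_kernel_product) (simp add: density_outside[OF \<rho>'])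
  have KL_eq: "KL \<rho>' \<rho> = ereal (integral\<^sup>L ?M ?K)"
    using True integral_kernel_product[OF KL_integrable] by (simp add: KL_def density_outside[OF \<rho>'])
  have A: "?A \<in> borel_measurable lborel" "\<And>z. 0 \<le> ?A z" "integrable lborel ?A" "(\<integral>z. ?A z \<partial>lborel) = 1"
    using prob_density_mixture[OF \<rho>'] by (auto simp: prob_density_def)
  note R_integrable = integrable_mixture_ratio[OF \<rho> A(1-3)]
    and R_le = integral_mixture_ratio_le[OF \<rho> A(1-3)]
  have pointwise: "AE x in ?M. ?D x - ?K x \<le> ?R x - ?P x"
    using AE_log_ratio_le[OF \<rho> \<rho>' abs_cont] by eventually_elim (simp add: split_beta')
  note P_integrable = integrable_joint_density[OF \<rho>']
  have "integral\<^sup>L ?M ?D - integral\<^sup>L ?M ?K = (\<integral>x. ?D x - ?K x \<partial>?M)"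
    by (rule Bochner_Integration.integral_diff[symmetric, OF integrable K_integrable])
  also have "\<dots> \<le> (\<integral>x. ?R x - ?P x \<partial>?M)"
    by (intro integral_mono_AE pointwise Bochner_Integration.integrable_diff integrable K_integrable
        R_integrable P_integrable)
  also have "\<dots> = integral\<^sup>L ?M ?R - integral\<^sup>L ?M ?P"
    by (rule Bochner_Integration.integral_diff[OF R_integrable P_integrable])
  also have "\<dots> \<le> 0"
    using R_le A(4) integral_joint_density[OF \<rho>'] by simp
  finally show ?thesis
    unfolding KL_eq by simp
qed

end

lemma
  fixes f :: "'b::euclidean_space \<Rightarrow> real" and q :: "'a::euclidean_space \<Rightarrow> 'b \<Rightarrow> real"
    and \<rho> \<rho>' :: "'a \<Rightarrow> real"
  assumes \<rho>: "integrable lborel \<rho>" and \<rho>': "integrable lborel \<rho>'"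
    and same_mass: "(\<integral>l. \<rho>' l \<partial>lborel) = (\<integral>l. \<rho> l \<partial>lborel)"
    and int1: "integrable (lborel \<Otimes>\<^sub>M lborel) (\<lambda>(l, z). \<rho> l * (q l z * (f z + ln (mixture q \<rho> z))))"
    and int2: "integrable (lborel \<Otimes>\<^sub>M lborel) (\<lambda>(l, z). \<rho>' l * (q l z * (f z + ln (mixture q \<rho>' z))))"
    and int3: "integrable (lborel \<Otimes>\<^sub>M lborel) (\<lambda>(l, z). \<rho>' l * (q l z * (f z + ln (mixture q \<rho> z))))"
  shows integrable_objL_gap: "integrable (lborel \<Otimes>\<^sub>M lborel)
          (\<lambda>(l, z). \<rho>' l * q l z * (ln (mixture q \<rho>' z) - ln (mixture q \<rho> z)))"
    and objL_gap_eq: "objL f q \<rho>' - objL f q \<rho> - (\<integral>l. first_variation f q \<rho> l * (\<rho>' l - \<rho> l) \<partial>lborel)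
          = (\<integral>x. (\<lambda>(l, z). \<rho>' l * q l z * (ln (mixture q \<rho>' z) - ln (mixture q \<rho> z))) x
              \<partial>(lborel \<Otimes>\<^sub>M lborel))"
proof -
  let ?M = "lborel \<Otimes>\<^sub>M lborel :: ('a \<times> 'b) measure"
  define F where "F \<sigma> \<tau> = (\<lambda>(l, z). \<sigma> l * (q l z * (f z + ln (mixture q \<tau> z))))" for \<sigma> \<tau> :: "'a \<Rightarrow> real"
  note int = int1[folded F_def] int2[folded F_def] int3[folded F_def]
  have objL_eq: "objL f q \<sigma> = integral\<^sup>L ?M (F \<sigma> \<sigma>)" if "integrable ?M (F \<sigma> \<sigma>)" for \<sigma>
    using lborel_pair.integral_fst[OF that[unfolded F_def]] by (simp add: objL_def F_def)
  have "first_variation f q \<rho> l * (\<rho>' l - \<rho> l)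
      = (\<integral>z. F \<rho>' \<rho> (l, z) \<partial>lborel) - (\<integral>z. F \<rho> \<rho> (l, z) \<partial>lborel) + (\<rho>' l - \<rho> l)" for l
    unfolding first_variation_def F_def
    by (simp only: case_prod_conv integral_mult_right_zero) (simp add: algebra_simps)
  then have "(\<integral>l. first_variation f q \<rho> l * (\<rho>' l - \<rho> l) \<partial>lborel)
      = (\<integral>l. (\<integral>z. F \<rho>' \<rho> (l, z) \<partial>lborel) - (\<integral>z. F \<rho> \<rho> (l, z) \<partial>lborel) + (\<rho>' l - \<rho> l) \<partial>lborel)"
    by simp
  also have "\<dots> = integral\<^sup>L ?M (F \<rho>' \<rho>) - integral\<^sup>L ?M (F \<rho> \<rho>)"
    using lborel_pair.integrable_fst'[OF int(3)] lborel_pair.integrable_fst'[OF int(1)]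
      lborel_pair.integral_fst'[OF int(3)] lborel_pair.integral_fst'[OF int(1)] \<rho> \<rho>' same_mass
    by simp
  finally have first_variation_eq: "(\<integral>l. first_variation f q \<rho> l * (\<rho>' l - \<rho> l) \<partial>lborel)
      = integral\<^sup>L ?M (F \<rho>' \<rho>) - integral\<^sup>L ?M (F \<rho> \<rho>)" .
  have gap: "(\<lambda>(l, z). \<rho>' l * q l z * (ln (mixture q \<rho>' z) - ln (mixture q \<rho> z)))
      = (\<lambda>x. F \<rho>' \<rho>' x - F \<rho>' \<rho> x)"
    by (auto simp: F_def algebra_simps)
  show "integrable ?M (\<lambda>(l, z). \<rho>' l * q l z * (ln (mixture q \<rho>' z) - ln (mixture q \<rho> z)))"
    unfolding gap using int by simp
  show "objL f q \<rho>' - objL f q \<rho> - (\<integral>l. first_variation f q \<rho> l * (\<rho>' l - \<rho> l) \<partial>lborel)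
      = integral\<^sup>L ?M (\<lambda>(l, z). \<rho>' l * q l z * (ln (mixture q \<rho>' z) - ln (mixture q \<rho> z)))"
    unfolding gap first_variation_eq objL_eq[OF int(1)] objL_eq[OF int(2)]
    using int by (simp add: Bochner_Integration.integral_diff)
qed

theorem lemma3:
  fixes \<Omega> :: "'a::euclidean_space set"
    and q :: "'a \<Rightarrow> 'b::euclidean_space \<Rightarrow> real"
    and piD :: "'b \<Rightarrow> real"
    and f :: "'b \<Rightarrow> real"
    and \<rho> \<rho>' :: "'a \<Rightarrow> real"
  assumes q_meas: "(\<lambda>(l, z). q l z) \<in> borel_measurable (lborel \<Otimes>\<^sub>M lborel)"
    and q_density: "\<And>l. l \<in> \<Omega> \<Longrightarrow> (\<forall>z. 0 \<le> q l z) \<and> integrable lborel (q l) \<and> (\<integral>z. q l z \<partial>lborel) = 1"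
    and piD_meas: "piD \<in> borel_measurable lborel"
    and piD_pos: "\<And>z. 0 < piD z"
    and f_def: "\<And>z. f z = - ln (piD z)"
    and \<rho>: "prob_density \<Omega> \<rho>"
    and \<rho>': "prob_density \<Omega> \<rho>'"
    and int1: "integrable (lborel \<Otimes>\<^sub>M lborel)
                 (\<lambda>(l, z). \<rho> l * (q l z * (f z + ln (mixture q \<rho> z))))"
    and int2: "integrable (lborel \<Otimes>\<^sub>M lborel)
                 (\<lambda>(l, z). \<rho>' l * (q l z * (f z + ln (mixture q \<rho>' z))))"
    and int3: "integrable (lborel \<Otimes>\<^sub>M lborel)
                 (\<lambda>(l, z). \<rho>' l * (q l z * (f z + ln (mixture q \<rho> z))))"
  shows "ereal (objL f q \<rho>' - objL f q \<rho>
            - (\<integral>l. first_variation f q \<rho> l * (\<rho>' l - \<rho> l) \<partial>lborel)) \<le> KL \<rho>' \<rho>"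
proof -
  interpret density_kernel \<Omega> q
    using q_meas q_density by unfold_locales auto
  have mass: "integrable lborel \<rho>" "integrable lborel \<rho>'" "(\<integral>l. \<rho>' l \<partial>lborel) = (\<integral>l. \<rho> l \<partial>lborel)"
    using \<rho> \<rho>' by (simp_all add: integrable_density integral_density)
  show ?thesis
    unfolding objL_gap_eq[OF mass int1 int2 int3]
    using mixture_log_ratio_le_KL[OF \<rho> \<rho>' integrable_objL_gap[OF mass int1 int2 int3]] .
qed

end
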